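(* Let $V\in(\mathbb{R}\cup\{-\infty\})^{n\times p}$ have no row and no column identically equal to $-\infty$, and let $T$ be the operator $$T_i(x)=\inf_{k\in[p],\,(i,k)\in E}\Big[-V_{ik}+\max_{j\in[n],\,j\neq i}(V_{jk}+x_j)\Big],\qquad i\in[n],$$ with $E=\{(i,k): V_{ik}\neq-\infty\}$. Then for all $\lambda\in[-\infty,0]$ and all $a\in\mathbb{R}^n$, $$B(-a,-\lambda)\subset\operatorname{Col}(V)\iff T(a)\le \lambda+a.$$
   Context: $\mathbb{R}_{\max}=\mathbb{R}\cup\{-\infty\}$, with $-\infty+c=-\infty$ and the maximum of an empty family equal to $-\infty$; $\lambda+a$ denotes $(\lambda+a_i)_i$ (so $-\infty+a$ is the identically $-\infty$ vector). $\operatorname{Col}(V)=\{Vx:x\in\mathbb{R}_{\max}^p\}$ with $(Vx)_i=\max_k(V_{ik}+x_k)$. Hilbert's projective metric: $d(x,y)=\inf\{\lambda-\mu:\lambda,\mu\in\mathbb{R},\ \mu+y_i\le x_i\le\lambda+y_i\ \forall i\}\in[0,+\infty]$. For $c\in\mathbb{R}^n$ and $r\in[0,+\infty]$, $B(c,r)=\{x\in\mathbb{R}_{\max}^n: d(c,x)\le r\}$ (so $B(c,+\infty)=\mathbb{R}^n$). *)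

theory Defs
  imports "HOL-Analysis.Analysis" "HOL-Library.Extended_Real"
begin

text \<open>Max-plus semiring R_max = R \<union> {-\<infinity>}, modelled inside ereal as values \<noteq> \<infinity>.
The maximum of an empty family is Sup {} = -\<infinity>.\<close>

definition rmax_vec :: "('n \<Rightarrow> ereal) \<Rightarrow> bool" where
  "rmax_vec x \<longleftrightarrow> (\<forall>i. x i \<noteq> \<infinity>)"

definition rmax_mat :: "('n \<Rightarrow> 'p \<Rightarrow> ereal) \<Rightarrow> bool" where
  "rmax_mat V \<longleftrightarrow> (\<forall>i k. V i k \<noteq> \<infinity>)"

definition mp_mult :: "('n \<Rightarrow> 'p::finite \<Rightarrow> ereal) \<Rightarrow> ('p \<Rightarrow> ereal) \<Rightarrow> 'n \<Rightarrow> ereal" where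
  "mp_mult V x = (\<lambda>i. SUP k. V i k + x k)"

definition Col :: "('n \<Rightarrow> 'p::finite \<Rightarrow> ereal) \<Rightarrow> ('n \<Rightarrow> ereal) set" where
  "Col V = {mp_mult V x | x. rmax_vec x}"

text \<open>Hilbert's projective metric, value in [0,+\<infinity>] (Inf {} = +\<infinity>).\<close>
definition hilbert_d :: "('n \<Rightarrow> ereal) \<Rightarrow> ('n \<Rightarrow> ereal) \<Rightarrow> ereal" where
  "hilbert_d x y = Inf {ereal (l - m) | l m :: real.
      \<forall>i. ereal m + y i \<le> x i \<and> x i \<le> ereal l + y i}"

text \<open>Ball B(c,r) for c real and r \<in> [0,+\<infinity>]; following the convention
B(c,+\<infinity>) = R^n, the ball consists of finite vectors (for finite r this is automatic).\<close>
definition hball :: "('n \<Rightarrow> real) \<Rightarrow> ereal \<Rightarrow> ('n \<Rightarrow> ereal) set" where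
  "hball c r = {x. (\<forall>i. x i \<noteq> \<infinity> \<and> x i \<noteq> -\<infinity>) \<and> hilbert_d (\<lambda>i. ereal (c i)) x \<le> r}"

definition opT :: "('n \<Rightarrow> 'p \<Rightarrow> ereal) \<Rightarrow> ('n \<Rightarrow> ereal) \<Rightarrow> 'n \<Rightarrow> ereal" where
  "opT V x = (\<lambda>i. INF k \<in> {k. V i k \<noteq> -\<infinity>}.
       - V i k + (SUP j \<in> {j. j \<noteq> i}. V j k + x j))"

end

theory Submission
  imports Defs
begin

text \<open>A finite vector x lies in Col V iff every coordinate i has a column k that supports x
there: V_jk + x_i \<le> V_ik + x_j for all j, i.e. x dominates a translate of column k and touches
it at i. By attainment of the finite infimum, T_i(a) \<le> \<lambda> + a_i says exactly that some column
supports a at i with slack -\<lambda> against every other coordinate. A point x of the ball deviates from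
-a by at most -\<lambda> in Hilbert's metric, so this slack makes the same column support x; conversely,
applying the characterization to the points -a + r e_i with 0 \<le> r \<le> -\<lambda> gives
T_i(a) \<le> a_i - r for all such r, which for \<lambda> = -\<infinity> forces T_i(a) = -\<infinity>.\<close>

lemma hilbert_d_real:
  fixes c x :: "'n::finite \<Rightarrow> real"
  shows "hilbert_d (\<lambda>i. ereal (c i)) (\<lambda>i. ereal (x i)) =
           ereal ((MAX i. c i - x i) - (MIN i. c i - x i))" (is "?d = ereal (?M - ?m)")
proof (rule antisym)
  have "?m \<le> c i - x i" "c i - x i \<le> ?M" for i
    by (simp_all add: Min_le Max_ge)
  then have "\<forall>i. ereal ?m + ereal (x i) \<le> ereal (c i) \<and> ereal (c i) \<le> ereal ?M + ereal (x i)"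
    by (auto simp: algebra_simps)
  then show "?d \<le> ereal (?M - ?m)"
    unfolding hilbert_d_def by (intro Inf_lower) blast
next
  show "ereal (?M - ?m) \<le> ?d"
    unfolding hilbert_d_def
  proof (rule Inf_greatest, clarsimp)
    fix l m :: real
    assume "\<forall>i. m + x i \<le> c i \<and> c i \<le> l + x i"
    then have "?M \<le> l" "m \<le> ?m"
      by (auto simp: Max_le_iff Min_ge_iff algebra_simps)
    then show "?M - ?m \<le> l - m"
      by linarith
  qed
qed

lemma hilbert_d_real_le_iff:
  fixes c x :: "'n::finite \<Rightarrow> real"
  shows "hilbert_d (\<lambda>i. ereal (c i)) (\<lambda>i. ereal (x i)) \<le> r \<longleftrightarrow>
           (\<forall>i j. ereal ((c j - x j) - (c i - x i)) \<le> r)"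
proof -
  have "(MAX i. c i - x i) \<in> range (\<lambda>i. c i - x i)" "(MIN i. c i - x i) \<in> range (\<lambda>i. c i - x i)"
    by (simp_all add: Max_in Min_in)
  then obtain jmax imin where
    jmax: "(MAX i. c i - x i) = c jmax - x jmax" and imin: "(MIN i. c i - x i) = c imin - x imin"
    by blast
  have "(c j - x j) - (c i - x i) \<le> (MAX i. c i - x i) - (MIN i. c i - x i)" for i j
    using Max_ge[of "range (\<lambda>i. c i - x i)"] Min_le[of "range (\<lambda>i. c i - x i)"]
    by (simp add: diff_mono)
  then show ?thesis
    unfolding hilbert_d_real using jmax imin by (metis ereal_less_eq(3) order_trans)
qed

lemma mem_hball_iff:
  fixes c :: "'n::finite \<Rightarrow> real"
  shows "x \<in> hball c r \<longleftrightarrow>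
           (\<exists>y. x = (\<lambda>i. ereal (y i)) \<and> (\<forall>i j. ereal ((c j - y j) - (c i - y i)) \<le> r))"
proof
  assume x: "x \<in> hball c r"
  define y where "y i = real_of_ereal (x i)" for i
  have "x = (\<lambda>i. ereal (y i))"
    using x unfolding hball_def y_def by (auto simp: fun_eq_iff ereal_real)
  with x show "\<exists>y. x = (\<lambda>i. ereal (y i)) \<and> (\<forall>i j. ereal ((c j - y j) - (c i - y i)) \<le> r)"
    unfolding hball_def by (auto simp: hilbert_d_real_le_iff)
qed (auto simp: hball_def hilbert_d_real_le_iff)

lemma supporting_column_if_mem_Col:
  fixes V :: "'n \<Rightarrow> 'p::finite \<Rightarrow> ereal" and x :: "'n \<Rightarrow> real"
  assumes "rmax_mat V" and "(\<lambda>i. ereal (x i)) \<in> Col V"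
  obtains k where "V i k \<noteq> -\<infinity>" and "\<And>j. V j k + ereal (x i) \<le> V i k + ereal (x j)"
proof -
  obtain z where "rmax_vec z" and x_eq: "\<And>j. ereal (x j) = (SUP k. V j k + z k)"
    using assms(2) unfolding Col_def mp_mult_def by (auto simp: fun_eq_iff)
  have "(SUP k. V i k + z k) = (MAX k. V i k + z k)"
    by (rule cSup_eq_Max) auto
  also have "\<dots> \<in> range (\<lambda>k. V i k + z k)"
    by (rule Max_in) auto
  finally obtain k where k: "V i k + z k = ereal (x i)"
    using x_eq[of i] by auto
  have "V i k \<noteq> -\<infinity>"
    using k \<open>rmax_vec z\<close> by (cases "z k") (auto simp: rmax_vec_def)
  moreover have "V j k + ereal (x i) \<le> V i k + ereal (x j)" for j
  proof -
    have "V j k + ereal (x i) = V i k + (V j k + z k)"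
      by (simp add: k[symmetric] ac_simps)
    also have "\<dots> \<le> V i k + ereal (x j)"
      unfolding x_eq[of j] by (intro add_left_mono SUP_upper) simp
    finally show ?thesis .
  qed
  ultimately show ?thesis
    using that by blast
qed

lemma mem_Col_if_supporting_columns:
  fixes V :: "'n \<Rightarrow> 'p::finite \<Rightarrow> ereal" and x :: "'n \<Rightarrow> real"
  assumes V: "rmax_mat V" and cols: "\<forall>k. \<exists>i. V i k \<noteq> -\<infinity>"
    and supp: "\<And>i. \<exists>k. V i k \<noteq> -\<infinity> \<and> (\<forall>j. V j k + ereal (x i) \<le> V i k + ereal (x j))"
  shows "(\<lambda>i. ereal (x i)) \<in> Col V"
proof -
  \<comment> \<open>the residuated (greatest) preimage: the largest z with V z \<le> x\<close>
  define z where "z k = (INF j. ereal (x j) - V j k)" for k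
  have z_le: "z k \<le> ereal (x j) - V j k" for j k
    unfolding z_def by (rule INF_lower) simp
  have z_fin: "z k \<noteq> \<infinity>" for k
  proof -
    obtain j where "V j k \<noteq> -\<infinity>"
      using cols by blast
    with z_le[of k j] V show ?thesis
      by (cases "V j k") (auto simp: rmax_mat_def)
  qed
  have "(SUP k. V i k + z k) = ereal (x i)" for i
  proof (rule antisym)
    show "(SUP k. V i k + z k) \<le> ereal (x i)"
    proof (rule SUP_least)
      fix k
      show "V i k + z k \<le> ereal (x i)"
        using z_le[of k i] z_fin[of k] V
        by (cases "V i k"; cases "z k") (auto simp: rmax_mat_def)
    qed
  next
    obtain k where k: "V i k \<noteq> -\<infinity>" "\<And>j. V j k + ereal (x i) \<le> V i k + ereal (x j)"
      using supp by blast
    then obtain v where v: "V i k = ereal v"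
      using V by (cases "V i k") (auto simp: rmax_mat_def)
    have "ereal (x i - v) \<le> z k"
      unfolding z_def
    proof (rule INF_greatest)
      fix j
      show "ereal (x i - v) \<le> ereal (x j) - V j k"
        using k(2)[of j] v V by (cases "V j k") (auto simp: rmax_mat_def)
    qed
    then have "ereal (x i) \<le> V i k + z k"
      using v z_fin[of k] by (cases "z k") auto
    also have "\<dots> \<le> (SUP k. V i k + z k)"
      by (rule SUP_upper) simp
    finally show "ereal (x i) \<le> (SUP k. V i k + z k)" .
  qed
  moreover have "rmax_vec z"
    using z_fin by (simp add: rmax_vec_def)
  ultimately show ?thesis
    unfolding Col_def mp_mult_def by (auto simp: fun_eq_iff intro!: exI[of _ z])
qed

lemma opT_le_iff:
  fixes V :: "'n \<Rightarrow> 'p::finite \<Rightarrow> ereal"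
  assumes V: "rmax_mat V" and row: "\<exists>k. V i k \<noteq> -\<infinity>"
  shows "opT V x i \<le> L \<longleftrightarrow> (\<exists>k. V i k \<noteq> -\<infinity> \<and> (\<forall>j. j \<noteq> i \<longrightarrow> V j k + x j \<le> L + V i k))"
proof -
  define K where "K = {k. V i k \<noteq> -\<infinity>}"
  define g where "g k = - V i k + (SUP j \<in> {j. j \<noteq> i}. V j k + x j)" for k
  have g_le_iff: "g k \<le> L \<longleftrightarrow> (\<forall>j. j \<noteq> i \<longrightarrow> V j k + x j \<le> L + V i k)" if k: "k \<in> K" for k
  proof -
    obtain v where "V i k = ereal v"
      using V k unfolding K_def by (cases "V i k") (auto simp: rmax_mat_def)
    moreover have "- ereal v + S \<le> L \<longleftrightarrow> S \<le> L + ereal v" for S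
      by (cases S; cases L) auto
    ultimately show ?thesis
      unfolding g_def by (simp add: SUP_le_iff)
  qed
  have "opT V x i = Min (g ` K)"
    unfolding opT_def g_def[symmetric] K_def[symmetric] using row
    by (intro cInf_eq_Min) (auto simp: K_def)
  also have "\<dots> \<le> L \<longleftrightarrow> (\<exists>k\<in>K. g k \<le> L)"
    using row by (subst Min_le_iff) (auto simp: K_def)
  finally show ?thesis
    using g_le_iff by (auto simp: K_def)
qed

lemma ereal_le_add_if_le_diff:
  fixes y lam :: ereal
  assumes "lam \<le> 0" and le: "\<And>r. 0 \<le> r \<Longrightarrow> ereal r \<le> - lam \<Longrightarrow> y \<le> ereal (c - r)"
  shows "y \<le> lam + ereal c"
proof (cases lam)
  case (real l)
  then show ?thesis
    using assms le[of "- l"] by (simp add: add.commute)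
next
  case MInf
  have "y \<le> ereal B" for B
    using le[of "max 0 (c - B)"] MInf by (simp add: order_trans)
  then show ?thesis
    using MInf ereal_bot by simp
qed (use assms in simp)

lemma hball_subset_Col_if_opT_le:
  fixes V :: "'n::finite \<Rightarrow> 'p::finite \<Rightarrow> ereal" and a :: "'n \<Rightarrow> real"
  assumes V: "rmax_mat V" and rows: "\<forall>i. \<exists>k. V i k \<noteq> -\<infinity>" and cols: "\<forall>k. \<exists>i. V i k \<noteq> -\<infinity>"
    and opT_le: "\<forall>i. opT V (\<lambda>j. ereal (a j)) i \<le> lam + ereal (a i)"
  shows "hball (\<lambda>i. - a i) (- lam) \<subseteq> Col V"
proof
  fix x
  assume "x \<in> hball (\<lambda>i. - a i) (- lam)"
  then obtain y where x: "x = (\<lambda>i. ereal (y i))"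
    and dist: "\<And>i j. ereal ((- a j - y j) - (- a i - y i)) \<le> - lam"
    by (auto simp: mem_hball_iff)
  have "\<exists>k. V i k \<noteq> -\<infinity> \<and> (\<forall>j. V j k + ereal (y i) \<le> V i k + ereal (y j))" for i
  proof -
    obtain k where k: "V i k \<noteq> -\<infinity>"
      and k_le: "\<And>j. j \<noteq> i \<Longrightarrow> V j k + ereal (a j) \<le> lam + ereal (a i) + V i k"
      using opT_le[rule_format, of i] unfolding opT_le_iff[OF V rows[rule_format]] by blast
    have "V j k + ereal (y i) \<le> V i k + ereal (y j)" for j
    proof (cases "j = i")
      case False
      then show ?thesis
        using k k_le[OF False] dist[of i j] dist[of j i] V
        by (cases "V j k"; cases "V i k"; cases lam) (auto simp: rmax_mat_def)
    qed simp
    with k show ?thesis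
      by blast
  qed
  then show "x \<in> Col V"
    unfolding x by (rule mem_Col_if_supporting_columns[OF V cols])
qed

lemma opT_le_if_hball_subset_Col:
  fixes V :: "'n::finite \<Rightarrow> 'p::finite \<Rightarrow> ereal" and a :: "'n \<Rightarrow> real"
  assumes V: "rmax_mat V" and row: "\<exists>k. V i k \<noteq> -\<infinity>" and "lam \<le> 0"
    and sub: "hball (\<lambda>i. - a i) (- lam) \<subseteq> Col V"
  shows "opT V (\<lambda>j. ereal (a j)) i \<le> lam + ereal (a i)"
proof (rule ereal_le_add_if_le_diff[OF \<open>lam \<le> 0\<close>])
  fix r :: real
  assume "0 \<le> r" and r_le: "ereal r \<le> - lam"
  define y where "y j = - a j + (if j = i then r else 0)" for j
  have "ereal ((- a j - y j) - (- a i' - y i')) \<le> - lam" for i' j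
    by (rule order_trans[OF _ r_le]) (use \<open>0 \<le> r\<close> in \<open>simp add: y_def\<close>)
  then have "(\<lambda>j. ereal (y j)) \<in> hball (\<lambda>j. - a j) (- lam)"
    unfolding mem_hball_iff by blast
  with sub obtain k where k: "V i k \<noteq> -\<infinity>" and k_le: "\<And>j. V j k + ereal (y i) \<le> V i k + ereal (y j)"
    using supporting_column_if_mem_Col[OF V] by blast
  have "V j k + ereal (a j) \<le> ereal (a i - r) + V i k" if "j \<noteq> i" for j
    using k_le[of j] that k V by (cases "V j k"; cases "V i k") (auto simp: y_def rmax_mat_def)
  with k show "opT V (\<lambda>j. ereal (a j)) i \<le> ereal (a i - r)"
    using opT_le_iff[OF V row] by blast
qed

theorem lemma3p4:
  fixes V :: "'n::finite \<Rightarrow> 'p::finite \<Rightarrow> ereal"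
    and lam :: ereal and a :: "'n \<Rightarrow> real"
  assumes "rmax_mat V"
    and "\<forall>i. \<exists>k. V i k \<noteq> -\<infinity>"
    and "\<forall>k. \<exists>i. V i k \<noteq> -\<infinity>"
    and "lam \<le> 0"
  shows "hball (\<lambda>i. - a i) (- lam) \<subseteq> Col V \<longleftrightarrow>
         (\<forall>i. opT V (\<lambda>j. ereal (a j)) i \<le> lam + ereal (a i))"
proof
  assume "hball (\<lambda>i. - a i) (- lam) \<subseteq> Col V"
  then show "\<forall>i. opT V (\<lambda>j. ereal (a j)) i \<le> lam + ereal (a i)"
    using opT_le_if_hball_subset_Col assms(1,2,4) by blast
next
  assume "\<forall>i. opT V (\<lambda>j. ereal (a j)) i \<le> lam + ereal (a i)"
  then show "hball (\<lambda>i. - a i) (- lam) \<subseteq> Col V"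
    by (rule hball_subset_Col_if_opT_le[OF assms(1-3)])
qed

end
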